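(* Let $p\in(0,1)$, $\gamma>0$, $B>0$, $w\in\mathbb{N}$. Then: (a) for each $N\in\mathbb{N}$, $\mathcal{T}_N$ has a unique maximizer over the set $\{(\xi_1,\dots,\xi_N):\xi_j\ge0,\ \sum_{j=1}^N\xi_j\le B\}$; (b) $\mathcal{T}_N^*$ is a (non-strictly) increasing function of $N$; (c) $\lim_{N\to\infty}\mathcal{T}_N^*=\mathcal{T}_\infty^*$, and this limit is finite.
   Context: Logarithms are base 2. A nonnegative sequence $(x_j)_{j\ge1}$ is admissible if $\sum_j x_j\le B$. For an admissible sequence, $$\mathcal{T}_\infty(x_1,x_2,\dots)=\sum_{k=1}^{w}p^2(1-p)^{k-1}\frac{k}{2}\log_2\!\Big(1+\gamma\frac{B}{k}\Big)+\sum_{j=1}^{\infty}p(1-p)^{j+w-1}\frac12\log_2(1+\gamma x_j)+\sum_{k=1}^{\infty}p^2(1-p)^{k+w-1}\frac{w}{2}\log_2\!\Big(1+\gamma\frac{B-\sum_{j=1}^{k}x_j}{w}\Big),$$ and $\mathcal{T}_\infty^*$ is the supremum of $\mathcal{T}_\infty$ over all admissible sequences. For $N\in\mathbb{N}$ and $\xi_1,\dots,\xi_N\ge0$ with $\sum_{j=1}^N\xi_j\le B$, define $\mathcal{T}_N(\xi_1,\dots,\xi_N)=\mathcal{T}_\infty(\xi_1,\dots,\xi_N,0,0,\dots)$, and let $\mathcal{T}_N^*$ be the supremum of $\mathcal{T}_N$ over this set. *)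

theory Defs
  imports "HOL-Analysis.Analysis"
begin

text \<open>Sequences (x_1, x_2, ...) are represented as functions nat => real,
  shifted by one: x j here stands for x_{j+1} in the paper.\<close>

definition admissible :: "real \<Rightarrow> (nat \<Rightarrow> real) \<Rightarrow> bool" where
  "admissible B x \<longleftrightarrow> (\<forall>j. 0 \<le> x j) \<and> summable x \<and> suminf x \<le> B"

definition T_inf :: "real \<Rightarrow> real \<Rightarrow> real \<Rightarrow> nat \<Rightarrow> (nat \<Rightarrow> real) \<Rightarrow> real" where
  "T_inf p \<gamma> B w x =
     (\<Sum>k=1..w. p^2 * (1-p)^(k-1) * (real k / 2) * log 2 (1 + \<gamma> * B / real k))
   + (\<Sum>j. p * (1-p)^(j + w) * (1/2) * log 2 (1 + \<gamma> * x j))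
   + (\<Sum>k. p^2 * (1-p)^(k + w) * (real w / 2)
             * log 2 (1 + \<gamma> * (B - (\<Sum>j\<le>k. x j)) / real w))"

definition T_inf_star :: "real \<Rightarrow> real \<Rightarrow> real \<Rightarrow> nat \<Rightarrow> real" where
  "T_inf_star p \<gamma> B w = Sup (T_inf p \<gamma> B w ` {x. admissible B x})"

text \<open>Feasible set for T_N: (xi_1..xi_N) embedded as a sequence vanishing from index N on.\<close>
definition feasible_N :: "real \<Rightarrow> nat \<Rightarrow> (nat \<Rightarrow> real) set" where
  "feasible_N B N = {\<xi>. (\<forall>j. 0 \<le> \<xi> j) \<and> (\<forall>j\<ge>N. \<xi> j = 0) \<and> (\<Sum>j<N. \<xi> j) \<le> B}"

definition T_N :: "real \<Rightarrow> real \<Rightarrow> real \<Rightarrow> nat \<Rightarrow> nat \<Rightarrow> (nat \<Rightarrow> real) \<Rightarrow> real" where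
  "T_N p \<gamma> B w N \<xi> = T_inf p \<gamma> B w (\<lambda>j. if j < N then \<xi> j else 0)"

definition T_N_star :: "real \<Rightarrow> real \<Rightarrow> real \<Rightarrow> nat \<Rightarrow> nat \<Rightarrow> real" where
  "T_N_star p \<gamma> B w N = Sup (T_N p \<gamma> B w N ` feasible_N B N)"

end

theory Submission
  imports Defs
begin

text \<open>
  Up to a constant, \<open>T\<^sub>\<infinity>\<close> is a sum of terms \<open>\<alpha>\<^sub>j log(1 + \<gamma> x\<^sub>j)\<close> and
  \<open>\<beta>\<^sub>k log(1 + \<gamma> (B - x\<^sub>1 - \<dots> - x\<^sub>k) / w)\<close> with geometrically decaying weights.
  Hence it is bounded on admissible sequences, and it is strictly midpoint concave, the first
  family being strictly concave in each coordinate. On the feasible set of length-\<open>N\<close> vectors,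
  which is compact in the product topology, the residual terms from index \<open>N\<close> on share one
  logarithm, so \<open>T\<^sub>N\<close> is a finite continuous expression and attains its maximum, which is
  unique by strict concavity. The feasible sets increase with \<open>N\<close>, and truncating an admissible
  sequence after \<open>N\<close> entries only enlarges the residual budgets, so it costs at most the tail of
  the first family, which tends to \<open>0\<close>; this squeezes \<open>T\<^sub>N\<^sup>*\<close> towards \<open>T\<^sub>\<infinity>\<^sup>*\<close>.
\<close>

lemma log_mean_less:
  fixes b A C :: real
  assumes "1 < b" "0 < A" "0 < C" "A \<noteq> C"
  shows "(log b A + log b C) / 2 < log b ((A + C) / 2)"
proof -
  have "((A + C) / 2)^2 - A * C = ((A - C) / 2)^2"
    by (simp add: power2_eq_square field_simps)
  moreover have "0 < ((A - C) / 2)^2"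
    using \<open>A \<noteq> C\<close> by simp
  ultimately have "A * C < ((A + C) / 2)^2"
    by linarith
  then have "log b (A * C) < log b (((A + C) / 2)^2)"
    using assms by simp
  then show ?thesis
    using assms by (simp add: log_mult log_nat_power)
qed

lemma log_mean_le:
  fixes b A C :: real
  assumes "1 < b" "0 < A" "0 < C"
  shows "(log b A + log b C) / 2 \<le> log b ((A + C) / 2)"
  using log_mean_less[OF assms] by (cases "A = C") auto

lemma summable_power_shift:
  fixes q :: real
  assumes "\<bar>q\<bar> < 1"
  shows "summable (\<lambda>j. q ^ (j + m))"
  using summable_mult[OF summable_geometric[of q], of "q ^ m"] assms
  by (simp add: power_add mult.commute)

lemma suminf_less_suminf:
  fixes f g :: "nat \<Rightarrow> real"
  assumes "summable f" "summable g" "\<And>n. f n \<le> g n" "f i < g i"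
  shows "suminf f < suminf g"
proof -
  have "0 < (\<Sum>n. g n - f n)"
    using assms by (intro suminf_pos2[where i = i] summable_diff) auto
  then show ?thesis
    using suminf_diff[OF assms(2,1)] by simp
qed

lemma suminf_tail_tendsto_zero:
  fixes f :: "nat \<Rightarrow> 'a::real_normed_vector"
  assumes "summable f"
  shows "(\<lambda>N. \<Sum>j. f (j + N)) \<longlonglongrightarrow> 0"
proof -
  have "(\<lambda>N. suminf f - (\<Sum>j<N. f j)) \<longlonglongrightarrow> suminf f - suminf f"
    by (intro tendsto_diff tendsto_const summable_LIMSEQ assms)
  moreover have "(\<Sum>j. f (j + N)) = suminf f - (\<Sum>j<N. f j)" for N
    using suminf_split_initial_segment[OF assms, of N] by simp
  ultimately show ?thesis
    by simp
qed

lemma continuous_on_coordinate [continuous_intros]: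
  "continuous_on S (\<lambda>x :: 'a \<Rightarrow> 'b::topological_space. x i)"
  by (rule continuous_on_subset[OF continuous_on_product_coordinates]) simp

lemma strictly_midpoint_concave_max_unique:
  fixes f :: "'a \<Rightarrow> real"
  assumes midpoint_closed: "\<And>x y. x \<in> C \<Longrightarrow> y \<in> C \<Longrightarrow> m x y \<in> C"
    and strictly_concave: "\<And>x y. x \<in> C \<Longrightarrow> y \<in> C \<Longrightarrow> x \<noteq> y \<Longrightarrow> (f x + f y) / 2 < f (m x y)"
    and "x \<in> C" "\<forall>z\<in>C. f z \<le> f x"
    and "y \<in> C" "\<forall>z\<in>C. f z \<le> f y"
  shows "x = y"
proof (rule ccontr)
  assume "x \<noteq> y"
  then have "(f x + f y) / 2 < f (m x y)"
    using strictly_concave assms(3,5) by blast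
  moreover have "f (m x y) \<le> f x" "f (m x y) \<le> f y"
    using midpoint_closed assms(3-6) by blast+
  ultimately show False
    by argo
qed

lemma admissible_bounds:
  assumes "admissible B x"
  shows "0 \<le> x j" "x j \<le> B" "0 \<le> (\<Sum>i\<le>k. x i)" "(\<Sum>i\<le>k. x i) \<le> B"
proof -
  have "(\<Sum>i\<le>k. x i) \<le> suminf x" for k
    using assms by (intro sum_le_suminf) (auto simp: admissible_def)
  then have partial: "(\<Sum>i\<le>k. x i) \<le> B" for k
    using assms unfolding admissible_def by (meson order_trans)
  have "x j \<le> (\<Sum>i\<le>j. x i)"
    using assms by (intro member_le_sum) (auto simp: admissible_def)
  then show "x j \<le> B"
    using partial[of j] by linarith
  show "0 \<le> x j" "0 \<le> (\<Sum>i\<le>k. x i)" "(\<Sum>i\<le>k. x i) \<le> B"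
    using assms partial by (simp_all add: admissible_def sum_nonneg)
qed

lemma admissible_midpoint:
  assumes "admissible B x" "admissible B y"
  shows "admissible B (\<lambda>j. (x j + y j) / 2)"
proof -
  have "(\<lambda>j. (x j + y j) / 2) sums ((suminf x + suminf y) / 2)"
    using assms by (intro sums_divide sums_add summable_sums) (simp_all add: admissible_def)
  then show ?thesis
    using assms by (auto simp: admissible_def sums_iff)
qed

lemma feasible_N_admissible:
  assumes "\<xi> \<in> feasible_N B N"
  shows "admissible B \<xi>"
proof -
  have "\<And>j. j \<notin> {..<N} \<Longrightarrow> \<xi> j = 0"
    using assms by (simp add: feasible_N_def)
  then have "\<xi> sums (\<Sum>j<N. \<xi> j)"
    by (intro sums_finite) auto
  then show ?thesis
    using assms by (auto simp: feasible_N_def admissible_def sums_iff)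
qed

lemma feasible_N_mono:
  assumes "N \<le> M"
  shows "feasible_N B N \<subseteq> feasible_N B M"
proof
  fix \<xi> assume \<xi>: "\<xi> \<in> feasible_N B N"
  then have "(\<Sum>j<M. \<xi> j) = (\<Sum>j<N. \<xi> j)"
    using assms by (intro sum.mono_neutral_right) (auto simp: feasible_N_def)
  then show "\<xi> \<in> feasible_N B M"
    using \<xi> assms by (auto simp: feasible_N_def)
qed

lemma feasible_N_midpoint:
  assumes "x \<in> feasible_N B N" "y \<in> feasible_N B N"
  shows "(\<lambda>j. (x j + y j) / 2) \<in> feasible_N B N"
proof -
  have "(\<Sum>j<N. (x j + y j) / 2) = ((\<Sum>j<N. x j) + (\<Sum>j<N. y j)) / 2"
    by (simp add: sum.distrib sum_divide_distrib[symmetric])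
  then show ?thesis
    using assms by (auto simp: feasible_N_def)
qed

lemma truncation_in_feasible_N:
  assumes "admissible B x"
  shows "(\<lambda>j. if j < N then x j else 0) \<in> feasible_N B N"
proof -
  have "(\<Sum>j<N. x j) \<le> suminf x"
    using assms by (intro sum_le_suminf) (auto simp: admissible_def)
  then show ?thesis
    using assms by (auto simp: feasible_N_def admissible_def)
qed

lemma zero_in_feasible_N: "0 \<le> B \<Longrightarrow> (\<lambda>_. 0) \<in> feasible_N B N"
  by (simp add: feasible_N_def)

lemma T_N_eq_T_inf:
  assumes "\<xi> \<in> feasible_N B N"
  shows "T_N p \<gamma> B w N \<xi> = T_inf p \<gamma> B w \<xi>"
proof -
  have "(\<lambda>j. if j < N then \<xi> j else 0) = \<xi>"
    using assms by (auto simp: feasible_N_def)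
  then show ?thesis
    by (simp add: T_N_def)
qed

lemma compact_feasible_N: "compact (feasible_N B N)"
proof -
  define box where "box = (\<Pi>\<^sub>E j\<in>UNIV. if j < N then {0..B} else {0 :: real})"
  have "compactin (product_topology (\<lambda>_. euclidean) UNIV) box"
    unfolding box_def by (subst compactin_PiE) auto
  then have compact_box: "compact box"
    by (simp add: euclidean_product_topology)
  have closed_budget: "closed {\<xi> :: nat \<Rightarrow> real. (\<Sum>j<N. \<xi> j) \<le> B}"
    by (intro closed_Collect_le continuous_intros)
  have "feasible_N B N = box \<inter> {\<xi>. (\<Sum>j<N. \<xi> j) \<le> B}"
  proof (intro equalityI subsetI)
    fix \<xi> assume \<xi>: "\<xi> \<in> feasible_N B N"
    have budget: "(\<Sum>j<N. \<xi> j) \<le> B"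
      using \<xi> by (simp add: feasible_N_def)
    have "\<xi> j \<le> (\<Sum>j<N. \<xi> j)" if "j < N" for j
      using \<xi> that by (intro member_le_sum) (auto simp: feasible_N_def)
    then have "\<xi> j \<le> B" if "j < N" for j
      using budget that by fastforce
    then have "\<xi> j \<in> (if j < N then {0..B} else {0})" for j
      using \<xi> by (auto simp: feasible_N_def)
    then show "\<xi> \<in> box \<inter> {\<xi>. (\<Sum>j<N. \<xi> j) \<le> B}"
      using \<xi> by (simp add: feasible_N_def box_def PiE_iff)
  next
    fix \<xi> assume "\<xi> \<in> box \<inter> {\<xi>. (\<Sum>j<N. \<xi> j) \<le> B}"
    then have sum: "(\<Sum>j<N. \<xi> j) \<le> B"
      and coord: "\<And>j. \<xi> j \<in> (if j < N then {0..B} else {0})"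
      by (auto simp: box_def PiE_iff)
    have "0 \<le> \<xi> j" for j
      using coord[of j] by (cases "j < N") auto
    moreover have "\<xi> j = 0" if "N \<le> j" for j
      using coord[of j] that by auto
    ultimately show "\<xi> \<in> feasible_N B N"
      using sum by (simp add: feasible_N_def)
  qed
  then show ?thesis
    using compact_Int_closed[OF compact_box closed_budget] by simp
qed

locale T_inf_params =
  fixes p \<gamma> B :: real and w :: nat
  assumes p_pos: "0 < p" and p_lt_1: "p < 1" and \<gamma>_pos: "0 < \<gamma>"
    and B_pos: "0 < B" and w_pos: "1 \<le> w"
begin

abbreviation T :: "(nat \<Rightarrow> real) \<Rightarrow> real" where
  "T \<equiv> T_inf p \<gamma> B w"

definition head :: real where
  "head = (\<Sum>k=1..w. p^2 * (1-p)^(k-1) * (real k / 2) * log 2 (1 + \<gamma> * B / real k))"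

definition \<alpha> :: "nat \<Rightarrow> real" where
  "\<alpha> j = p * (1-p)^(j + w) * (1/2)"

definition \<beta> :: "nat \<Rightarrow> real" where
  "\<beta> k = p^2 * (1-p)^(k + w) * (real w / 2)"

definition direct_term :: "(nat \<Rightarrow> real) \<Rightarrow> nat \<Rightarrow> real" where
  "direct_term x j = \<alpha> j * log 2 (1 + \<gamma> * x j)"

definition residual_term :: "(nat \<Rightarrow> real) \<Rightarrow> nat \<Rightarrow> real" where
  "residual_term x k = \<beta> k * log 2 (1 + \<gamma> * (B - (\<Sum>j\<le>k. x j)) / real w)"

lemma T_eq: "T x = head + suminf (direct_term x) + suminf (residual_term x)"
  by (simp only: T_inf_def head_def direct_term_def[abs_def] residual_term_def[abs_def] \<alpha>_def \<beta>_def)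

lemma \<alpha>_pos: "0 < \<alpha> j"
  using p_pos p_lt_1 by (simp add: \<alpha>_def)

lemma \<beta>_pos: "0 < \<beta> k"
  using p_pos p_lt_1 w_pos by (simp add: \<beta>_def)

lemma summable_\<alpha>: "summable \<alpha>"
  unfolding \<alpha>_def using p_pos p_lt_1
  by (intro summable_mult summable_mult2 summable_power_shift) auto

lemma summable_\<beta>: "summable \<beta>"
  unfolding \<beta>_def using p_pos p_lt_1
  by (intro summable_mult summable_mult2 summable_power_shift) auto

lemma direct_term_bounds:
  assumes "admissible B x"
  shows "0 \<le> direct_term x j" "direct_term x j \<le> \<alpha> j * log 2 (1 + \<gamma> * B)"
proof -
  have "0 \<le> \<gamma> * x j" "\<gamma> * x j \<le> \<gamma> * B"
    using admissible_bounds[OF assms] \<gamma>_pos by simp_all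
  then have "0 \<le> log 2 (1 + \<gamma> * x j)" "log 2 (1 + \<gamma> * x j) \<le> log 2 (1 + \<gamma> * B)"
    by simp_all
  then show "0 \<le> direct_term x j" "direct_term x j \<le> \<alpha> j * log 2 (1 + \<gamma> * B)"
    unfolding direct_term_def using \<alpha>_pos[of j] by (simp_all add: mult_left_mono)
qed

lemma residual_term_bounds:
  assumes "admissible B x"
  shows "0 \<le> residual_term x k" "residual_term x k \<le> \<beta> k * log 2 (1 + \<gamma> * B / real w)"
proof -
  define u where "u = \<gamma> * (B - (\<Sum>j\<le>k. x j)) / real w"
  have "0 \<le> u" "u \<le> \<gamma> * B / real w"
    unfolding u_def using admissible_bounds[OF assms] \<gamma>_pos w_pos by (simp_all add: divide_right_mono)
  then have "0 \<le> log 2 (1 + u)" "log 2 (1 + u) \<le> log 2 (1 + \<gamma> * B / real w)"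
    by simp_all
  then show "0 \<le> residual_term x k" "residual_term x k \<le> \<beta> k * log 2 (1 + \<gamma> * B / real w)"
    unfolding residual_term_def u_def[symmetric] using \<beta>_pos[of k] by (simp_all add: mult_left_mono)
qed

lemma summable_direct_term: "admissible B x \<Longrightarrow> summable (direct_term x)"
  by (rule summable_comparison_test'[OF summable_mult2[OF summable_\<alpha>], of 0])
    (use direct_term_bounds in auto)

lemma summable_residual_term: "admissible B x \<Longrightarrow> summable (residual_term x)"
  by (rule summable_comparison_test'[OF summable_mult2[OF summable_\<beta>], of 0])
    (use residual_term_bounds in auto)

lemma T_upper_bound:
  assumes "admissible B x"
  shows "T x \<le> head + suminf \<alpha> * log 2 (1 + \<gamma> * B) + suminf \<beta> * log 2 (1 + \<gamma> * B / real w)"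
proof -
  have "suminf (direct_term x) \<le> (\<Sum>j. \<alpha> j * log 2 (1 + \<gamma> * B))"
    by (rule suminf_le[OF direct_term_bounds(2)[OF assms] summable_direct_term[OF assms]
          summable_mult2[OF summable_\<alpha>]])
  moreover have "suminf (residual_term x) \<le> (\<Sum>k. \<beta> k * log 2 (1 + \<gamma> * B / real w))"
    by (rule suminf_le[OF residual_term_bounds(2)[OF assms] summable_residual_term[OF assms]
          summable_mult2[OF summable_\<beta>]])
  ultimately show ?thesis
    unfolding T_eq suminf_mult2[OF summable_\<alpha>] suminf_mult2[OF summable_\<beta>] by linarith
qed

lemma bdd_above_T: "bdd_above (T ` {x. admissible B x})"
  using T_upper_bound by (intro bdd_aboveI2) blast

lemma direct_term_midpoint:
  assumes "admissible B x" "admissible B y"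
  shows "(direct_term x j + direct_term y j) / 2 \<le> direct_term (\<lambda>j. (x j + y j) / 2) j"
    and "x j \<noteq> y j \<Longrightarrow> (direct_term x j + direct_term y j) / 2 < direct_term (\<lambda>j. (x j + y j) / 2) j"
proof -
  define A C where "A = 1 + \<gamma> * x j" and "C = 1 + \<gamma> * y j"
  have pos: "0 < A" "0 < C"
    unfolding A_def C_def using admissible_bounds(1)[OF assms(1)] admissible_bounds(1)[OF assms(2)] \<gamma>_pos
    by (simp_all add: add_pos_nonneg)
  have avg: "(direct_term x j + direct_term y j) / 2 = \<alpha> j * ((log 2 A + log 2 C) / 2)"
    unfolding direct_term_def A_def C_def by (simp add: field_simps)
  have mid: "direct_term (\<lambda>j. (x j + y j) / 2) j = \<alpha> j * log 2 ((A + C) / 2)"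
    unfolding direct_term_def A_def C_def by (simp add: field_simps)
  show "(direct_term x j + direct_term y j) / 2 \<le> direct_term (\<lambda>j. (x j + y j) / 2) j"
    unfolding avg mid by (rule mult_left_mono[OF log_mean_le[of 2, OF _ pos] less_imp_le[OF \<alpha>_pos]]) simp
  assume "x j \<noteq> y j"
  then have "A \<noteq> C"
    unfolding A_def C_def using \<gamma>_pos by simp
  show "(direct_term x j + direct_term y j) / 2 < direct_term (\<lambda>j. (x j + y j) / 2) j"
    unfolding avg mid by (rule mult_strict_left_mono[OF log_mean_less[of 2, OF _ pos \<open>A \<noteq> C\<close>] \<alpha>_pos]) simp
qed

lemma residual_term_midpoint:
  assumes "admissible B x" "admissible B y"
  shows "(residual_term x k + residual_term y k) / 2 \<le> residual_term (\<lambda>j. (x j + y j) / 2) k"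
proof -
  define X Y where "X = (\<Sum>j\<le>k. x j)" and "Y = (\<Sum>j\<le>k. y j)"
  define A C where "A = 1 + \<gamma> * (B - X) / real w" and "C = 1 + \<gamma> * (B - Y) / real w"
  have "0 \<le> \<gamma> * (B - X) / real w" "0 \<le> \<gamma> * (B - Y) / real w"
    unfolding X_def Y_def using admissible_bounds(4)[OF assms(1)] admissible_bounds(4)[OF assms(2)] \<gamma>_pos
    by simp_all
  then have pos: "0 < A" "0 < C"
    unfolding A_def C_def by linarith+
  have avg: "(residual_term x k + residual_term y k) / 2 = \<beta> k * ((log 2 A + log 2 C) / 2)"
    unfolding residual_term_def A_def C_def X_def Y_def by (simp add: add_divide_distrib distrib_left)
  have "(\<Sum>j\<le>k. (x j + y j) / 2) = (X + Y) / 2"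
    unfolding X_def Y_def by (simp add: sum.distrib sum_divide_distrib[symmetric])
  moreover have "0 < real w"
    using w_pos by simp
  ultimately have arg: "1 + \<gamma> * (B - (\<Sum>j\<le>k. (x j + y j) / 2)) / real w = (A + C) / 2"
    unfolding A_def C_def by (simp add: field_simps)
  have mid: "residual_term (\<lambda>j. (x j + y j) / 2) k = \<beta> k * log 2 ((A + C) / 2)"
    by (simp only: residual_term_def arg)
  show ?thesis
    unfolding avg mid by (rule mult_left_mono[OF log_mean_le[of 2, OF _ pos] less_imp_le[OF \<beta>_pos]]) simp
qed

lemma T_midpoint_strict:
  assumes "admissible B x" "admissible B y" "x \<noteq> y"
  shows "(T x + T y) / 2 < T (\<lambda>j. (x j + y j) / 2)"
proof -
  define m where "m = (\<lambda>j. (x j + y j) / 2)"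
  obtain j0 where "x j0 \<noteq> y j0"
    using assms(3) by (meson ext)
  have "admissible B m"
    unfolding m_def using admissible_midpoint[OF assms(1,2)] .
  note sd = summable_direct_term[OF assms(1)] summable_direct_term[OF assms(2)]
  note sr = summable_residual_term[OF assms(1)] summable_residual_term[OF assms(2)]
  have direct_avg: "(suminf (direct_term x) + suminf (direct_term y)) / 2
      = (\<Sum>j. (direct_term x j + direct_term y j) / 2)"
    by (simp only: suminf_add[OF sd] suminf_divide[OF summable_add[OF sd]])
  have residual_avg: "(suminf (residual_term x) + suminf (residual_term y)) / 2
      = (\<Sum>k. (residual_term x k + residual_term y k) / 2)"
    by (simp only: suminf_add[OF sr] suminf_divide[OF summable_add[OF sr]])
  have direct_less: "(\<Sum>j. (direct_term x j + direct_term y j) / 2) < suminf (direct_term m)"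
  proof (rule suminf_less_suminf)
    show "summable (\<lambda>j. (direct_term x j + direct_term y j) / 2)"
      by (intro summable_divide summable_add sd)
    show "summable (direct_term m)"
      using summable_direct_term[OF \<open>admissible B m\<close>] .
    show "(direct_term x j + direct_term y j) / 2 \<le> direct_term m j" for j
      unfolding m_def by (rule direct_term_midpoint(1)[OF assms(1,2)])
    show "(direct_term x j0 + direct_term y j0) / 2 < direct_term m j0"
      unfolding m_def by (rule direct_term_midpoint(2)[OF assms(1,2) \<open>x j0 \<noteq> y j0\<close>])
  qed
  have residual_le: "(\<Sum>k. (residual_term x k + residual_term y k) / 2) \<le> suminf (residual_term m)"
  proof (rule suminf_le)
    show "summable (\<lambda>k. (residual_term x k + residual_term y k) / 2)"
      by (intro summable_divide summable_add sr)
    show "summable (residual_term m)"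
      using summable_residual_term[OF \<open>admissible B m\<close>] .
    show "(residual_term x k + residual_term y k) / 2 \<le> residual_term m k" for k
      unfolding m_def by (rule residual_term_midpoint[OF assms(1,2)])
  qed
  have "(T x + T y) / 2 = head + (suminf (direct_term x) + suminf (direct_term y)) / 2
      + (suminf (residual_term x) + suminf (residual_term y)) / 2"
    unfolding T_eq by (simp add: field_simps)
  also have "\<dots> < head + suminf (direct_term m) + suminf (residual_term m)"
    unfolding direct_avg residual_avg using direct_less residual_le by (rule add_strict_left_mono[THEN add_less_le_mono])
  finally show ?thesis
    unfolding T_eq m_def .
qed

definition T_finite :: "nat \<Rightarrow> (nat \<Rightarrow> real) \<Rightarrow> real" where
  "T_finite N \<xi> = head + (\<Sum>j<N. direct_term \<xi> j) + (\<Sum>k<N. residual_term \<xi> k)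
     + (\<Sum>k. \<beta> (k + N)) * log 2 (1 + \<gamma> * (B - (\<Sum>j<N. \<xi> j)) / real w)"

lemma T_eq_T_finite:
  assumes "\<xi> \<in> feasible_N B N"
  shows "T \<xi> = T_finite N \<xi>"
proof -
  have admissible: "admissible B \<xi>"
    using feasible_N_admissible[OF assms] .
  have vanish: "\<xi> j = 0" if "N \<le> j" for j
    using assms that by (simp add: feasible_N_def)
  have "suminf (direct_term \<xi>) = (\<Sum>j<N. direct_term \<xi> j)"
    by (rule suminf_finite) (auto simp: direct_term_def vanish)
  moreover have "residual_term \<xi> (k + N) = \<beta> (k + N) * log 2 (1 + \<gamma> * (B - (\<Sum>j<N. \<xi> j)) / real w)" for k
  proof -
    have "(\<Sum>j\<le>k + N. \<xi> j) = (\<Sum>j<N. \<xi> j)"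
      by (rule sum.mono_neutral_right) (auto simp: vanish)
    then show ?thesis
      by (simp add: residual_term_def)
  qed
  then have "suminf (residual_term \<xi>)
      = (\<Sum>k. \<beta> (k + N)) * log 2 (1 + \<gamma> * (B - (\<Sum>j<N. \<xi> j)) / real w) + (\<Sum>k<N. residual_term \<xi> k)"
    using suminf_split_initial_segment[OF summable_residual_term[OF admissible], of N]
      suminf_mult2[OF summable_ignore_initial_segment[OF summable_\<beta>, of N]]
    by simp
  ultimately show ?thesis
    unfolding T_eq T_finite_def by simp
qed

lemma continuous_on_T_finite: "continuous_on (feasible_N B N) (T_finite N)"
proof -
  have "1 + \<gamma> * \<xi> j \<noteq> 0"
    "1 + \<gamma> * (B - (\<Sum>i\<le>k. \<xi> i)) / real w \<noteq> 0"
    "1 + \<gamma> * (B - (\<Sum>i<N. \<xi> i)) / real w \<noteq> 0"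
    if "\<xi> \<in> feasible_N B N" for \<xi> j k
  proof -
    have "admissible B \<xi>"
      using feasible_N_admissible[OF that] .
    moreover have "(\<Sum>i<N. \<xi> i) \<le> B"
      using that by (simp add: feasible_N_def)
    ultimately have "0 < 1 + \<gamma> * \<xi> j"
      "0 < 1 + \<gamma> * (B - (\<Sum>i\<le>k. \<xi> i)) / real w"
      "0 < 1 + \<gamma> * (B - (\<Sum>i<N. \<xi> i)) / real w"
      using admissible_bounds \<gamma>_pos w_pos by (auto intro!: add_pos_nonneg)
    then show "1 + \<gamma> * \<xi> j \<noteq> 0"
      "1 + \<gamma> * (B - (\<Sum>i\<le>k. \<xi> i)) / real w \<noteq> 0"
      "1 + \<gamma> * (B - (\<Sum>i<N. \<xi> i)) / real w \<noteq> 0"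
      by simp_all
  qed
  then show ?thesis
    unfolding T_finite_def[abs_def] direct_term_def residual_term_def
    by (intro continuous_intros) (use w_pos in auto)
qed

lemma T_has_maximizer: "\<exists>\<xi>\<in>feasible_N B N. \<forall>\<eta>\<in>feasible_N B N. T \<eta> \<le> T \<xi>"
proof -
  have "feasible_N B N \<noteq> {}"
    using zero_in_feasible_N[of B N] B_pos by auto
  then obtain \<xi> where "\<xi> \<in> feasible_N B N" "\<forall>\<eta>\<in>feasible_N B N. T_finite N \<eta> \<le> T_finite N \<xi>"
    using continuous_attains_sup[OF compact_feasible_N _ continuous_on_T_finite] by blast
  then show ?thesis
    using T_eq_T_finite by metis
qed

lemma T_N_unique_maximizer:
  "\<exists>!\<xi>. \<xi> \<in> feasible_N B N \<and> (\<forall>\<eta>\<in>feasible_N B N. T_N p \<gamma> B w N \<eta> \<le> T_N p \<gamma> B w N \<xi>)"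
proof -
  have "\<exists>!\<xi>. \<xi> \<in> feasible_N B N \<and> (\<forall>\<eta>\<in>feasible_N B N. T \<eta> \<le> T \<xi>)"
  proof (rule ex_ex1I)
    show "\<exists>\<xi>. \<xi> \<in> feasible_N B N \<and> (\<forall>\<eta>\<in>feasible_N B N. T \<eta> \<le> T \<xi>)"
      using T_has_maximizer by blast
  next
    fix \<xi> \<zeta>
    assume "\<xi> \<in> feasible_N B N \<and> (\<forall>\<eta>\<in>feasible_N B N. T \<eta> \<le> T \<xi>)"
      and "\<zeta> \<in> feasible_N B N \<and> (\<forall>\<eta>\<in>feasible_N B N. T \<eta> \<le> T \<zeta>)"
    then show "\<xi> = \<zeta>"
      by (intro strictly_midpoint_concave_max_unique[where C = "feasible_N B N" and f = T
            and m = "\<lambda>x y j. (x j + y j) / 2"])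
        (blast intro: feasible_N_midpoint T_midpoint_strict feasible_N_admissible)+
  qed
  moreover have "T_N p \<gamma> B w N \<eta> = T \<eta>" if "\<eta> \<in> feasible_N B N" for \<eta>
    using T_N_eq_T_inf[OF that] .
  ultimately show ?thesis
    by (metis (no_types, lifting))
qed

lemma T_N_star_eq: "T_N_star p \<gamma> B w N = Sup (T ` feasible_N B N)"
  unfolding T_N_star_def using T_N_eq_T_inf by (metis (no_types, lifting) image_cong)

lemma T_image_feasible_N_nonempty: "T ` feasible_N B N \<noteq> {}"
  using zero_in_feasible_N[of B N] B_pos by auto

lemma T_image_feasible_N_subset: "T ` feasible_N B N \<subseteq> T ` {x. admissible B x}"
  using feasible_N_admissible by blast

lemma bdd_above_T_feasible_N: "bdd_above (T ` feasible_N B N)"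
  using bdd_above_mono[OF bdd_above_T T_image_feasible_N_subset] .

lemma T_N_star_mono: "mono (T_N_star p \<gamma> B w)"
proof (rule monoI)
  fix N M :: nat assume "N \<le> M"
  then have "T ` feasible_N B N \<subseteq> T ` feasible_N B M"
    using feasible_N_mono by blast
  then show "T_N_star p \<gamma> B w N \<le> T_N_star p \<gamma> B w M"
    unfolding T_N_star_eq by (rule cSup_subset_mono[OF T_image_feasible_N_nonempty bdd_above_T_feasible_N])
qed

lemma T_N_star_le_T_inf_star: "T_N_star p \<gamma> B w N \<le> T_inf_star p \<gamma> B w"
  unfolding T_N_star_eq T_inf_star_def
  by (rule cSup_subset_mono[OF T_image_feasible_N_nonempty bdd_above_T T_image_feasible_N_subset])

definition tail :: "nat \<Rightarrow> real" where
  "tail N = (\<Sum>j. \<alpha> (j + N)) * log 2 (1 + \<gamma> * B)"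

lemma tail_tendsto_zero: "tail \<longlonglongrightarrow> 0"
  unfolding tail_def[abs_def]
  using tendsto_mult_left_zero[OF suminf_tail_tendsto_zero[OF summable_\<alpha>]] .

lemma T_le_truncation:
  assumes "admissible B x"
  shows "T x \<le> T (\<lambda>j. if j < N then x j else 0) + tail N"
proof -
  define xt where "xt = (\<lambda>j. if j < N then x j else 0)"
  have "admissible B xt"
    unfolding xt_def using feasible_N_admissible[OF truncation_in_feasible_N[OF assms]] .
  have "suminf (direct_term x) = (\<Sum>j. direct_term x (j + N)) + (\<Sum>j<N. direct_term xt j)"
    using suminf_split_initial_segment[OF summable_direct_term[OF assms], of N]
    by (simp add: direct_term_def xt_def)
  also have "(\<Sum>j. direct_term x (j + N)) \<le> tail N"
    unfolding tail_def suminf_mult2[OF summable_ignore_initial_segment[OF summable_\<alpha>]]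
    by (intro suminf_le direct_term_bounds(2)[OF assms] summable_mult2
        summable_ignore_initial_segment summable_direct_term[OF assms] summable_\<alpha>)
  also have "(\<Sum>j<N. direct_term xt j) \<le> suminf (direct_term xt)"
    using direct_term_bounds(1)[OF \<open>admissible B xt\<close>]
    by (intro sum_le_suminf summable_direct_term[OF \<open>admissible B xt\<close>]) auto
  finally have direct: "suminf (direct_term x) \<le> tail N + suminf (direct_term xt)"
    by simp
  have "residual_term x k \<le> residual_term xt k" for k
  proof -
    have "(\<Sum>j\<le>k. xt j) \<le> (\<Sum>j\<le>k. x j)"
      using admissible_bounds(1)[OF assms] by (intro sum_mono) (simp add: xt_def)
    then have "log 2 (1 + \<gamma> * (B - (\<Sum>j\<le>k. x j)) / real w) \<le> log 2 (1 + \<gamma> * (B - (\<Sum>j\<le>k. xt j)) / real w)"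
      using admissible_bounds(4)[OF assms, of k] \<gamma>_pos w_pos
      by (simp add: add_pos_nonneg divide_right_mono)
    then show ?thesis
      unfolding residual_term_def using \<beta>_pos[of k] by (simp add: mult_left_mono)
  qed
  then have "suminf (residual_term x) \<le> suminf (residual_term xt)"
    by (intro suminf_le summable_residual_term assms \<open>admissible B xt\<close>)
  with direct show ?thesis
    unfolding T_eq xt_def by linarith
qed

lemma T_inf_star_le_T_N_star_plus_tail: "T_inf_star p \<gamma> B w \<le> T_N_star p \<gamma> B w N + tail N"
  unfolding T_inf_star_def
proof (rule cSUP_least)
  show "{x. admissible B x} \<noteq> {}"
    using feasible_N_admissible[OF zero_in_feasible_N[of B N]] B_pos by auto
  fix x assume "x \<in> {x. admissible B x}"
  then have admissible: "admissible B x"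
    by simp
  have "T (\<lambda>j. if j < N then x j else 0) \<le> T_N_star p \<gamma> B w N"
    unfolding T_N_star_eq
    using truncation_in_feasible_N[OF admissible] bdd_above_T_feasible_N
    by (intro cSup_upper) auto
  then show "T x \<le> T_N_star p \<gamma> B w N + tail N"
    using T_le_truncation[OF admissible, of N] by linarith
qed

lemma T_N_star_tendsto: "T_N_star p \<gamma> B w \<longlonglongrightarrow> T_inf_star p \<gamma> B w"
proof (rule tendsto_sandwich)
  show "\<forall>\<^sub>F N in sequentially. T_inf_star p \<gamma> B w - tail N \<le> T_N_star p \<gamma> B w N"
    using T_inf_star_le_T_N_star_plus_tail by (simp add: algebra_simps)
  show "\<forall>\<^sub>F N in sequentially. T_N_star p \<gamma> B w N \<le> T_inf_star p \<gamma> B w"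
    using T_N_star_le_T_inf_star by simp
  show "(\<lambda>N. T_inf_star p \<gamma> B w - tail N) \<longlonglongrightarrow> T_inf_star p \<gamma> B w"
    using tendsto_diff[OF tendsto_const tail_tendsto_zero] by simp
qed simp

end

theorem lemma2:
  fixes p \<gamma> B :: real and w :: nat
  assumes "0 < p" "p < 1" "0 < \<gamma>" "0 < B" "1 \<le> w"
  shows "(\<forall>N\<ge>1. \<exists>!\<xi>. \<xi> \<in> feasible_N B N \<and>
            (\<forall>\<eta>\<in>feasible_N B N. T_N p \<gamma> B w N \<eta> \<le> T_N p \<gamma> B w N \<xi>))
       \<and> mono_on {1..} (T_N_star p \<gamma> B w)
       \<and> bdd_above (T_inf p \<gamma> B w ` {x. admissible B x})
       \<and> (\<lambda>N. T_N_star p \<gamma> B w N) \<longlonglongrightarrow> T_inf_star p \<gamma> B w"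
proof -
  interpret T_inf_params p \<gamma> B w
    using assms by unfold_locales
  show ?thesis
    using T_N_unique_maximizer mono_imp_mono_on[OF T_N_star_mono] bdd_above_T T_N_star_tendsto
    by blast
qed

end
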